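(* Let $N\ge1$, $\Omega=[1,N+1]$, and for $j=1,\ldots,N$ let $B_{1,j}(x)=1$ if $j\le x<j+1$ and $B_{1,j}(x)=0$ otherwise. Let $s=1$. If the distinct points $\{x_1,\ldots,x_m\}\subset\Omega$ are unisolvent for the $s$-sparse interpolation with the basis $\{B_{1,1},\ldots,B_{1,N}\}$ and the domain $\Omega$, then $m\ge N$.
   Context: Let $\mathbf U^s:=\{\sum_{j\in T}c_jB_{1,j}: T\subset\{1,\ldots,N\},\ \#T\le s,\ c_j\in\mathbb{C}\}$. A set of $m$ distinct points $\{x_1,\ldots,x_m\}\subset\Omega$ is unisolvent if whenever $f,g\in\mathbf U^s$ satisfy $f(x_j)=g(x_j)$ for $j=1,\ldots,m$, then $f\equiv g$. *)

theory Defs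
  imports Complex_Main
begin

definition Bspline1 :: "nat \<Rightarrow> real \<Rightarrow> complex" where
  "Bspline1 j x = (if real j \<le> x \<and> x < real j + 1 then 1 else 0)"

definition Omega :: "nat \<Rightarrow> real set" where
  "Omega N = {1 .. real N + 1}"

definition sparse_space :: "nat \<Rightarrow> nat \<Rightarrow> (real \<Rightarrow> complex) set" where
  "sparse_space N s = {f. \<exists>T c. T \<subseteq> {1..N} \<and> card T \<le> s \<and>
      f = (\<lambda>x. \<Sum>j\<in>T. c j * Bspline1 j x)}"

definition unisolvent :: "nat \<Rightarrow> nat \<Rightarrow> nat \<Rightarrow> (nat \<Rightarrow> real) \<Rightarrow> bool" where
  "unisolvent N s m x \<longleftrightarrow>
     (\<forall>f\<in>sparse_space N s. \<forall>g\<in>sparse_space N s.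
        (\<forall>i\<in>{1..m}. f (x i) = g (x i)) \<longrightarrow> (\<forall>y\<in>Omega N. f y = g y))"

end

theory Submission
  imports Defs
begin

text \<open>Each point lies in the support of at most one B_{1,j}. With fewer than N points some
  B_{1,j} therefore vanishes at all of them, so the 1-sparse functions B_{1,j} and 0 agree at
  the points but differ at the knot j of the domain.\<close>

lemma Bspline1_nonzero_imp_floor:
  assumes "Bspline1 j y \<noteq> 0"
  shows "j = nat \<lfloor>y\<rfloor>"
proof -
  from assms have "real j \<le> y" "y < real j + 1"
    by (auto simp: Bspline1_def split: if_splits)
  then have "\<lfloor>y\<rfloor> = int j" by (simp add: floor_eq_iff)
  then show ?thesis by simp
qed

lemma Bspline1_at_knot [simp]: "Bspline1 j (real j) = 1"
  by (simp add: Bspline1_def)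

lemma Bspline1_in_sparse_space:
  assumes "j \<in> {1..N}" "s \<ge> 1"
  shows "Bspline1 j \<in> sparse_space N s"
  unfolding sparse_space_def
  using assms by (intro CollectI exI[of _ "{j}"] exI[of _ "\<lambda>_. 1"]) auto

lemma zero_in_sparse_space: "(\<lambda>_. 0) \<in> sparse_space N s"
  unfolding sparse_space_def
  by (intro CollectI exI[of _ "{}"] exI[of _ "\<lambda>_. 0"]) auto

lemma unisolventD:
  assumes "unisolvent N s m x" "f \<in> sparse_space N s" "g \<in> sparse_space N s"
    and "\<forall>i\<in>{1..m}. f (x i) = g (x i)" "y \<in> Omega N"
  shows "f y = g y"
  using assms unfolding unisolvent_def by blast

lemma unisolvent_imp_Bspline1_nonzero_at_point:
  assumes "unisolvent N s m x" "s \<ge> 1" "j \<in> {1..N}"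
  shows "\<exists>i\<in>{1..m}. Bspline1 j (x i) \<noteq> 0"
proof (rule ccontr)
  assume "\<not> ?thesis"
  then have "\<forall>i\<in>{1..m}. Bspline1 j (x i) = (\<lambda>_. 0) (x i)" by simp
  moreover have "real j \<in> Omega N" using assms(3) by (auto simp: Omega_def)
  ultimately have "Bspline1 j (real j) = 0"
    using unisolventD[OF assms(1) Bspline1_in_sparse_space[OF assms(3,2)] zero_in_sparse_space]
    by blast
  then show False by simp
qed

lemma unisolvent_imp_card_ge:
  assumes "unisolvent N s m x" "s \<ge> 1"
  shows "m \<ge> N"
proof -
  have "{1..N} \<subseteq> (\<lambda>i. nat \<lfloor>x i\<rfloor>) ` {1..m}"
    using unisolvent_imp_Bspline1_nonzero_at_point[OF assms] Bspline1_nonzero_imp_floor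
    by blast
  then have "card {1..N} \<le> card ((\<lambda>i. nat \<lfloor>x i\<rfloor>) ` {1..m})"
    by (intro card_mono) auto
  also have "\<dots> \<le> card {1..m}" by (rule card_image_le) simp
  finally show ?thesis by simp
qed

theorem proposition1:
  fixes N m :: nat and x :: "nat \<Rightarrow> real"
  assumes "N \<ge> 1"
    and "inj_on x {1..m}"
    and "x ` {1..m} \<subseteq> Omega N"
    and "unisolvent N 1 m x"
  shows "m \<ge> N"
  using unisolvent_imp_card_ge[OF assms(4)] by simp

end
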